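(* Let $f:[0,1]\to\mathbb{R}$ with $f(0),f(1)\in\mathbb{Z}$, and let $n\in\mathbb{N}_+$, $n\ge 3$. Set, for $x\in[0,1]$, \[ \Phi_n(x):=(n+1)\int_0^1 \left(t^2+(1-t)^2\right)\frac{(nx-3)t^2(1-t)^{n-2}-(nx-2)t^3(1-t)^{n-3}+t^{nx}(1-t)^{n(1-x)}}{(1-2t)^2}\,dt. \] (a) If $f(x)-\Phi_n(x)$ is convex on $[0,1]$, then $\widetilde{B}_n(f)$ and $\widehat{B}_n(f)$ are convex on $[0,1]$. (b) If $f(x)+\Phi_n(x)$ is concave on $[0,1]$, then $\widetilde{B}_n(f)$ and $\widehat{B}_n(f)$ are concave on $[0,1]$.
   Context: For $n\in\mathbb{N}_+$ and $f:[0,1]\to\mathbb{R}$, define $\widetilde{B}_n(f)(x):=\sum_{k=0}^n \left[f\left(\frac{k}{n}\right)\binom{n}{k}\right]x^k(1-x)^{n-k}$, where $[\alpha]$ is the largest integer $\le\alpha$, and $\widehat{B}_n(f)(x):=\sum_{k=0}^n \left\langle f\left(\frac{k}{n}\right)\binom{n}{k}\right\rangle x^k(1-x)^{n-k}$, where $\langle\alpha\rangle$ is the integer nearest to $\alpha$ (when $\alpha$ is a half-integer, $\langle\alpha\rangle$ may be either neighbouring integer, chosen arbitrarily; the result holds for any such choice). *)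

theory Defs
  imports "HOL-Analysis.Analysis"
begin

definition bern_form :: "nat \<Rightarrow> (nat \<Rightarrow> real) \<Rightarrow> real \<Rightarrow> real" where
  "bern_form n c x = (\<Sum>k=0..n. c k * x ^ k * (1 - x) ^ (n - k))"

definition B_tilde :: "nat \<Rightarrow> (real \<Rightarrow> real) \<Rightarrow> real \<Rightarrow> real" where
  "B_tilde n f = bern_form n (\<lambda>k. of_int \<lfloor>f (real k / real n) * real (n choose k)\<rfloor>)"

definition nearest_choice :: "nat \<Rightarrow> (real \<Rightarrow> real) \<Rightarrow> (nat \<Rightarrow> int) \<Rightarrow> bool" where
  "nearest_choice n f r \<longleftrightarrow>
     (\<forall>k\<le>n. \<bar>f (real k / real n) * real (n choose k) - of_int (r k)\<bar> \<le> 1/2)"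

definition B_hat :: "nat \<Rightarrow> (nat \<Rightarrow> int) \<Rightarrow> real \<Rightarrow> real" where
  "B_hat n r = bern_form n (\<lambda>k. of_int (r k))"

definition Phi :: "nat \<Rightarrow> real \<Rightarrow> real" where
  "Phi n x = (real n + 1) * integral {0..1} (\<lambda>t.
      (t^2 + (1 - t)^2) *
      (((real n * x - 3) * t^2 * (1 - t)^(n - 2) - (real n * x - 2) * t^3 * (1 - t)^(n - 3)
        + t powr (real n * x) * (1 - t) powr (real n * (1 - x))) / (1 - 2 * t)^2))"

end

theory Submission
  imports Defs
begin

text \<open>
  A polynomial sum b_k Bernstein n k is convex on [0, 1] when its coefficient sequence has
  nonnegative second differences. The coefficients of the rounded operators are
  b_k = f(k/n) - e_k, where e_k C(n,k) is a rounding error lying in an interval [a, b] with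
  b - a <= 1 (namely [0, 1] or [-1/2, 1/2]). By the log-concavity of the binomial coefficients,
  2 / C(n,k+1) <= 1 / C(n,k) + 1 / C(n,k+2), so the second difference of such errors is at most
  1 / C(n,k) + 1 / C(n,k+2). This is exactly the second difference of Phi_n on the grid k/n:
  second differencing in n x turns the numerator of the integrand into
  (1 - 2t)^2 t^k (1 - t)^(n-k-2), which cancels the denominator, and a Beta integral evaluates
  the rest. So convexity of f - Phi_n leaves enough room to absorb the rounding; the concave
  case follows by negation.
\<close>

definition second_diff :: "(nat \<Rightarrow> real) \<Rightarrow> nat \<Rightarrow> real" where
  "second_diff b k = b k - 2 * b (k + 1) + b (k + 2)"

lemma second_diff_diff: "second_diff (\<lambda>k. a k - b k) k = second_diff a k - second_diff b k"
  by (simp add: second_diff_def)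

lemma Bernstein_has_real_derivative:
  "(Bernstein (Suc m) k has_real_derivative
     real (Suc m) * ((if k = 0 then 0 else Bernstein m (k - 1) x) - Bernstein m k x)) (at x)"
proof (cases k)
  case 0
  show ?thesis unfolding 0 Bernstein_def
    by (rule derivative_eq_intros refl)+ simp
next
  case (Suc j)
  define c where "c = real (Suc m choose Suc j)"
  define D where "D = c * (real (Suc j) * (x ^ j * (1 - x) ^ (m - j))
      - real (m - j) * (x ^ Suc j * (1 - x) ^ (m - j - 1)))"
  have "((\<lambda>x. c * x ^ Suc j * (1 - x) ^ (m - j)) has_real_derivative D) (at x)"
    unfolding D_def by (rule derivative_eq_intros refl)+ (simp add: algebra_simps)
  moreover have "D = real (Suc m) * (Bernstein m j x - Bernstein m (Suc j) x)"
  proof -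
    have "c * real (Suc j) = real (Suc m) * real (m choose j)"
      unfolding c_def by (metis Suc_times_binomial mult.commute of_nat_mult)
    moreover have "c * real (m - j) = real (Suc m) * real (m choose Suc j)"
      unfolding c_def using binomial_absorb_comp[of "Suc m" "Suc j"]
      by (metis diff_Suc_Suc diff_Suc_1 mult.commute of_nat_mult)
    moreover have "D = (c * real (Suc j)) * (x ^ j * (1 - x) ^ (m - j))
        - (c * real (m - j)) * (x ^ Suc j * (1 - x) ^ (m - j - 1))"
      unfolding D_def by (simp only: right_diff_distrib mult.assoc)
    ultimately show ?thesis
      by (simp add: Bernstein_def algebra_simps)
  qed
  ultimately show ?thesis
    unfolding Suc Bernstein_def c_def by simp
qed

definition Bernstein_poly :: "nat \<Rightarrow> (nat \<Rightarrow> real) \<Rightarrow> real \<Rightarrow> real" where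
  "Bernstein_poly m b x = (\<Sum>k\<le>m. b k * Bernstein m k x)"

lemma Bernstein_poly_has_real_derivative:
  "(Bernstein_poly (Suc m) b has_real_derivative
     real (Suc m) * Bernstein_poly m (\<lambda>k. b (Suc k) - b k) x) (at x)"
proof -
  define M where "M = real (Suc m)"
  define B where "B k = (if k = 0 then 0 else Bernstein m (k - 1) x)" for k
  have "(Bernstein_poly (Suc m) b has_real_derivative
      (\<Sum>k\<le>Suc m. b k * (M * (B k - Bernstein m k x)))) (at x)"
    unfolding Bernstein_poly_def[abs_def] M_def B_def
    by (rule DERIV_sum DERIV_cmult Bernstein_has_real_derivative)+
  moreover have "(\<Sum>k\<le>Suc m. b k * (M * (B k - Bernstein m k x)))
      = M * ((\<Sum>k\<le>Suc m. b k * B k) - (\<Sum>k\<le>Suc m. b k * Bernstein m k x))"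
    by (simp add: sum_distrib_left sum_subtractf algebra_simps)
  moreover have "(\<Sum>k\<le>Suc m. b k * B k) = (\<Sum>k\<le>m. b (Suc k) * Bernstein m k x)"
    by (subst sum.atMost_Suc_shift) (simp add: B_def)
  moreover have "(\<Sum>k\<le>Suc m. b k * Bernstein m k x) = (\<Sum>k\<le>m. b k * Bernstein m k x)"
    by (simp add: Bernstein_def)
  ultimately show ?thesis
    unfolding M_def Bernstein_poly_def by (simp only: sum_subtractf left_diff_distrib)
qed

lemma Bernstein_poly_nonneg:
  "(\<And>k. k \<le> m \<Longrightarrow> 0 \<le> b k) \<Longrightarrow> 0 \<le> x \<Longrightarrow> x \<le> 1 \<Longrightarrow> 0 \<le> Bernstein_poly m b x"
  unfolding Bernstein_poly_def by (intro sum_nonneg mult_nonneg_nonneg Bernstein_nonneg) auto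

lemma convex_on_Bernstein_poly:
  assumes "\<And>k. k \<le> m \<Longrightarrow> 0 \<le> second_diff b k"
  shows "convex_on {0..1} (Bernstein_poly (Suc (Suc m)) b)"
proof (rule f''_ge0_imp_convex)
  define b' where "b' k = b (Suc k) - b k" for k
  show "(Bernstein_poly (Suc (Suc m)) b has_real_derivative
      real (Suc (Suc m)) * Bernstein_poly (Suc m) b' x) (at x)" for x
    unfolding b'_def by (rule Bernstein_poly_has_real_derivative)
  show "((\<lambda>x. real (Suc (Suc m)) * Bernstein_poly (Suc m) b' x) has_real_derivative
      real (Suc (Suc m)) * (real (Suc m) * Bernstein_poly m (second_diff b) x)) (at x)" for x
  proof -
    have "(\<lambda>k. b' (Suc k) - b' k) = second_diff b"
      by (auto simp: b'_def second_diff_def)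
    then show ?thesis
      using DERIV_cmult[OF Bernstein_poly_has_real_derivative[of m b'], of "real (Suc (Suc m))"]
      by (simp only:)
  qed
  show "0 \<le> real (Suc (Suc m)) * (real (Suc m) * Bernstein_poly m (second_diff b) x)"
    if "x \<in> {0..1}" for x
    using that assms by (intro mult_nonneg_nonneg Bernstein_poly_nonneg) auto
qed simp

lemma bern_form_eq_Bernstein_poly:
  "bern_form n c = Bernstein_poly n (\<lambda>k. c k / real (n choose k))"
  unfolding bern_form_def Bernstein_poly_def Bernstein_def
  by (auto simp: atLeast0AtMost intro!: sum.cong)

lemma convex_on_bern_form:
  assumes "2 \<le> n" and "\<And>k. k + 2 \<le> n \<Longrightarrow> 0 \<le> second_diff (\<lambda>k. c k / real (n choose k)) k"
  shows "convex_on {0..1} (bern_form n c)"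
proof -
  obtain m where "n = Suc (Suc m)"
    using assms(1) by (metis add_2_eq_Suc le_Suc_ex)
  then show ?thesis
    unfolding bern_form_eq_Bernstein_poly using assms(2)
    by (auto intro!: convex_on_Bernstein_poly)
qed

lemma bern_form_uminus: "bern_form n (\<lambda>k. - c k) = (\<lambda>x. - bern_form n c x)"
  unfolding bern_form_def by (simp add: sum_negf)

lemma binomial_log_concave:
  assumes "k + 2 \<le> n"
  shows "(n choose k) * (n choose (k + 2)) \<le> (n choose (k + 1))\<^sup>2"
proof -
  have ratio_k: "(n - k) * (n choose k) = (k + 1) * (n choose (k + 1))"
    using binomial_absorption[of k n] binomial_absorb_comp[of n k] by simp
  have ratio_Suc_k: "(k + 2) * (n choose (k + 2)) = (n - k - 1) * (n choose (k + 1))"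
    using binomial_absorption[of "k + 1" n] binomial_absorb_comp[of n "k + 1"] by simp
  have "((k + 2) * (n - k)) * ((n choose k) * (n choose (k + 2)))
      = ((n - k) * (n choose k)) * ((k + 2) * (n choose (k + 2)))"
    by (simp only: mult_ac)
  also have "\<dots> = ((k + 1) * (n - k - 1)) * (n choose (k + 1))\<^sup>2"
    unfolding ratio_k ratio_Suc_k power2_eq_square by (simp only: mult_ac)
  also have "\<dots> \<le> ((k + 2) * (n - k)) * (n choose (k + 1))\<^sup>2"
    by (intro mult_right_mono mult_le_mono) auto
  finally show ?thesis
    using assms by simp
qed

lemma two_div_le_inverse_add:
  fixes p q r :: real
  assumes "0 < p" "0 < q" "0 < r" "p * r \<le> q\<^sup>2"
  shows "2 / q \<le> 1 / p + 1 / r"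
proof -
  have "2 * (p * r) = sqrt (p * r) * (2 * sqrt (p * r))"
    using assms by simp
  also have "\<dots> \<le> q * (p + r)"
  proof (rule mult_mono)
    show "sqrt (p * r) \<le> q"
      using assms by (simp add: real_le_lsqrt)
    show "2 * sqrt (p * r) \<le> p + r"
      using arith_geo_mean_sqrt[of p r] assms by simp
  qed (use assms in auto)
  finally show ?thesis
    using assms by (simp add: field_simps)
qed

lemma two_div_binomial_le:
  assumes "k + 2 \<le> n"
  shows "2 / real (n choose (k + 1)) \<le> 1 / real (n choose k) + 1 / real (n choose (k + 2))"
proof (rule two_div_le_inverse_add)
  show "real (n choose k) * real (n choose (k + 2)) \<le> (real (n choose (k + 1)))\<^sup>2"
    using binomial_log_concave[OF assms] by (simp flip: of_nat_mult of_nat_power)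
qed (use assms in auto)

lemma second_diff_le_of_scaled_bounds:
  fixes e :: "nat \<Rightarrow> real"
  assumes "k + 2 \<le> n" "a \<le> 0" "b - a \<le> 1"
    and bounded: "\<And>j. j \<le> n \<Longrightarrow> e j * real (n choose j) \<in> {a..b}"
  shows "second_diff e k \<le> 1 / real (n choose k) + 1 / real (n choose (k + 2))"
proof -
  define S where "S = 1 / real (n choose k) + 1 / real (n choose (k + 2))"
  have bounds: "a / real (n choose j) \<le> e j \<and> e j \<le> b / real (n choose j)" if "j \<le> n" for j
    using bounded[OF that] that by (simp add: field_simps)
  have "e k + e (k + 2) \<le> b * S"
    using bounds[of k] bounds[of "k + 2"] assms(1) by (simp add: S_def algebra_simps)
  moreover have "- 2 * e (k + 1) \<le> - a * S"
  proof -
    have "- 2 * e (k + 1) \<le> - a * (2 / real (n choose (k + 1)))"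
      using bounds[of "k + 1"] assms(1) by (simp add: field_simps)
    also have "\<dots> \<le> - a * S"
      using two_div_binomial_le[OF assms(1)] assms(2) unfolding S_def by (intro mult_left_mono) auto
    finally show ?thesis .
  qed
  moreover have "(b - a) * S \<le> S"
    using mult_right_mono[OF assms(3), of S] by (simp add: S_def)
  ultimately show ?thesis
    unfolding second_diff_def S_def[symmetric] by (simp add: left_diff_distrib)
qed

lemma second_diff_convex_on_grid:
  assumes "convex_on {0..1} g" "k + 2 \<le> n"
  shows "0 \<le> second_diff (\<lambda>j. g (real j / real n)) k"
proof -
  have "real k / real n \<in> {0..1}" "real (k + 2) / real n \<in> {0..1}"
    using assms(2) by (auto simp: divide_le_eq_1 simp del: of_nat_add)
  then have "g ((1 - 1 / 2) *\<^sub>R (real k / real n) + (1 / 2) *\<^sub>R (real (k + 2) / real n))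
      \<le> (1 - 1 / 2) * g (real k / real n) + (1 / 2) * g (real (k + 2) / real n)"
    by (intro convex_onD[OF assms(1)]) auto
  moreover have "(1 - 1 / 2) *\<^sub>R (real k / real n) + (1 / 2) *\<^sub>R (real (k + 2) / real n)
      = real (k + 1) / real n"
    using assms(2) by (simp add: field_simps)
  ultimately show ?thesis
    unfolding second_diff_def by simp
qed

lemma has_integral_power_mult_power:
  "((\<lambda>t. t ^ a * (1 - t) ^ b) has_integral 1 / (real (a + b + 1) * real (a + b choose a))) {0..1::real}"
proof -
  have "((\<lambda>t. t powr (real a + 1 - 1) * (1 - t) powr (real b + 1 - 1)) has_integral
      Beta (real a + 1) (real b + 1)) {0..1}"
    by (rule has_integral_Beta_real) auto
  moreover have "Beta (real a + 1) (real b + 1) = fact a * fact b / fact (a + b + 1)"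
  proof -
    have "real a + 1 + (real b + 1) = 1 + real (a + b + 1)" by simp
    then show ?thesis unfolding Beta_def
      using Gamma_fact[of a, where 'a=real] Gamma_fact[of b, where 'a=real]
        Gamma_fact[of "a + b + 1", where 'a=real]
      by (simp add: add.commute)
  qed
  moreover have "fact a * fact b / fact (a + b + 1) = 1 / (real (a + b + 1) * real (a + b choose a))"
  proof -
    have "fact a * fact b * real (a + b choose a) = (fact (a + b) :: real)"
      using binomial_fact_lemma[of a "a + b"] by (metis add_diff_cancel_left' le_add1 of_nat_fact of_nat_mult)
    then show ?thesis
      by (simp add: divide_simps)
  qed
  ultimately have "((\<lambda>t. t powr real a * (1 - t) powr real b) has_integral
      1 / (real (a + b + 1) * real (a + b choose a))) {0..1}"
    by simp
  then show ?thesis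
    by (rule has_integral_spike_finite[where S="{0, 1}", rotated 2]) (auto simp: powr_realpow)
qed

lemma has_integral_second_diff_weight:
  assumes "k + 2 \<le> n"
  shows "((\<lambda>t. (t\<^sup>2 + (1 - t)\<^sup>2) * (t ^ k * (1 - t) ^ (n - k - 2))) has_integral
          (1 / real (n choose k) + 1 / real (n choose (k + 2))) / (real n + 1)) {0..1}"
proof -
  obtain m where n: "n = k + 2 + m"
    using assms le_Suc_ex by blast
  have "((\<lambda>t. t ^ (k + 2) * (1 - t) ^ m + t ^ k * (1 - t) ^ (m + 2)) has_integral
      1 / (real (n + 1) * real (n choose (k + 2))) + 1 / (real (n + 1) * real (n choose k))) {0..1}"
    using has_integral_add[OF has_integral_power_mult_power[of "k + 2" m]
        has_integral_power_mult_power[of k "m + 2"]]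
    by (simp add: n add_ac)
  moreover have "(\<lambda>t::real. t ^ (k + 2) * (1 - t) ^ m + t ^ k * (1 - t) ^ (m + 2))
      = (\<lambda>t. (t\<^sup>2 + (1 - t)\<^sup>2) * (t ^ k * (1 - t) ^ (n - k - 2)))"
    by (auto simp: n power_add algebra_simps power2_eq_square)
  ultimately show ?thesis
    by (simp add: add_divide_distrib ac_simps)
qed

definition Phi_numerator :: "nat \<Rightarrow> nat \<Rightarrow> real \<Rightarrow> real" where
  "Phi_numerator n j t = (real j - 3) * t\<^sup>2 * (1 - t) ^ (n - 2)
     - (real j - 2) * t ^ 3 * (1 - t) ^ (n - 3) + t ^ j * (1 - t) ^ (n - j)"

definition Phi_integrand :: "nat \<Rightarrow> nat \<Rightarrow> real \<Rightarrow> real" where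
  "Phi_integrand n j t = (t\<^sup>2 + (1 - t)\<^sup>2) * (Phi_numerator n j t / (1 - 2 * t)\<^sup>2)"

lemma Phi_grid:
  assumes "0 < n" "j \<le> n"
  shows "Phi n (real j / real n) = (real n + 1) * integral {0..1} (Phi_integrand n j)"
proof -
  have "real n * (real j / real n) = real j" "real n * (1 - real j / real n) = real (n - j)"
    using assms by (simp_all add: of_nat_diff field_simps)
  then have "integral {0..1} (Phi_integrand n j) = integral {0..1} (\<lambda>t.
      (t\<^sup>2 + (1 - t)\<^sup>2) *
      (((real n * (real j / real n) - 3) * t\<^sup>2 * (1 - t) ^ (n - 2)
        - (real n * (real j / real n) - 2) * t ^ 3 * (1 - t) ^ (n - 3)
        + t powr (real n * (real j / real n)) * (1 - t) powr (real n * (1 - real j / real n)))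
       / (1 - 2 * t)\<^sup>2))"
    by (intro integral_spike[where S="{0, 1}"])
      (auto simp: Phi_integrand_def Phi_numerator_def powr_realpow)
  then show ?thesis
    unfolding Phi_def by simp
qed

lemma second_diff_Phi_numerator:
  assumes "k + 2 \<le> n"
  shows "second_diff (\<lambda>j. Phi_numerator n j t) k = (1 - 2 * t)\<^sup>2 * (t ^ k * (1 - t) ^ (n - k - 2))"
proof -
  obtain m where "n = k + 2 + m"
    using assms le_Suc_ex by blast
  then show ?thesis
    by (simp add: second_diff_def Phi_numerator_def power_add algebra_simps power2_eq_square)
qed

lemma second_diff_Phi_integrand:
  assumes "k + 2 \<le> n" "t \<noteq> 1 / 2"
  shows "second_diff (\<lambda>j. Phi_integrand n j t) k = (t\<^sup>2 + (1 - t)\<^sup>2) * (t ^ k * (1 - t) ^ (n - k - 2))"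
proof -
  have "second_diff (\<lambda>j. Phi_integrand n j t) k
      = (t\<^sup>2 + (1 - t)\<^sup>2) * (second_diff (\<lambda>j. Phi_numerator n j t) k / (1 - 2 * t)\<^sup>2)"
    by (simp add: second_diff_def Phi_integrand_def diff_divide_distrib add_divide_distrib algebra_simps)
  moreover have "(1 - 2 * t)\<^sup>2 \<noteq> 0"
    using assms(2) by simp
  ultimately show ?thesis
    by (simp add: second_diff_Phi_numerator[OF assms(1)])
qed

lemma Phi_numerator_0:
  assumes "3 \<le> n"
  shows "Phi_numerator n 0 t = (1 - 2 * t)\<^sup>2 * (2 * t * (1 - t) ^ (n - 3) + (1 - t) ^ (n - 2))"
proof -
  obtain m where "n = m + 3"
    using assms le_Suc_ex by (metis add.commute)
  then show ?thesis
    by (simp add: Phi_numerator_def power_add algebra_simps power2_eq_square power3_eq_cube)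
qed

lemma Phi_numerator_1:
  assumes "3 \<le> n"
  shows "Phi_numerator n 1 t = (1 - 2 * t)\<^sup>2 * (t * (1 - t) ^ (n - 3))"
proof -
  obtain m where "n = m + 3"
    using assms le_Suc_ex by (metis add.commute)
  then have "n - 1 = m + 2" "n - 2 = m + 1" "n - 3 = m"
    by auto
  then show ?thesis
    by (simp add: Phi_numerator_def power_add algebra_simps power2_eq_square power3_eq_cube)
qed

lemma Phi_integrand_has_integral_step:
  assumes "k + 2 \<le> n"
    and "Phi_integrand n k integrable_on {0..1}" "Phi_integrand n (k + 1) integrable_on {0..1}"
  shows "(Phi_integrand n (k + 2) has_integral
      2 * integral {0..1} (Phi_integrand n (k + 1)) - integral {0..1} (Phi_integrand n k)
      + (1 / real (n choose k) + 1 / real (n choose (k + 2))) / (real n + 1)) {0..1}"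
proof -
  have "((\<lambda>t. 2 * Phi_integrand n (k + 1) t - Phi_integrand n k t
      + (t\<^sup>2 + (1 - t)\<^sup>2) * (t ^ k * (1 - t) ^ (n - k - 2))) has_integral
      2 * integral {0..1} (Phi_integrand n (k + 1)) - integral {0..1} (Phi_integrand n k)
      + (1 / real (n choose k) + 1 / real (n choose (k + 2))) / (real n + 1)) {0..1}"
    using assms
    by (intro has_integral_add has_integral_diff has_integral_mult_right
        has_integral_second_diff_weight integrable_integral)
  moreover have "Phi_integrand n (k + 2) t = 2 * Phi_integrand n (k + 1) t - Phi_integrand n k t
      + (t\<^sup>2 + (1 - t)\<^sup>2) * (t ^ k * (1 - t) ^ (n - k - 2))" if "t \<noteq> 1 / 2" for t
    using second_diff_Phi_integrand[OF assms(1) that] by (simp add: second_diff_def)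
  ultimately show ?thesis
    by (elim has_integral_spike_finite[where S="{1 / 2}", rotated 2]) auto
qed

lemma Phi_integrand_integrable:
  assumes "3 \<le> n"
  shows "j \<le> n \<Longrightarrow> Phi_integrand n j integrable_on {0..1}"
proof (induction j rule: less_induct)
  case (less j)
  consider "j = 0" | "j = 1" | k where "j = k + 2"
    by (metis One_nat_def add_2_eq_Suc' not0_implies_Suc)
  then show ?case
  proof cases
    case 1
    have "(\<lambda>t::real. (t\<^sup>2 + (1 - t)\<^sup>2) * (2 * t * (1 - t) ^ (n - 3) + (1 - t) ^ (n - 2)))
        integrable_on {0..1}"
      by (intro integrable_continuous_interval continuous_intros)
    then show ?thesis
      by (elim integrable_spike_finite[where S="{1 / 2}", rotated 2])
        (auto simp: 1 Phi_integrand_def Phi_numerator_0[OF assms])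
  next
    case 2
    have "(\<lambda>t::real. (t\<^sup>2 + (1 - t)\<^sup>2) * (t * (1 - t) ^ (n - 3))) integrable_on {0..1}"
      by (intro integrable_continuous_interval continuous_intros)
    then show ?thesis
      by (elim integrable_spike_finite[where S="{1 / 2}", rotated 2])
        (auto simp: 2 Phi_integrand_def Phi_numerator_1[OF assms, unfolded One_nat_def])
  next
    case 3
    then show ?thesis
      using less Phi_integrand_has_integral_step[of k n] by auto
  qed
qed

lemma second_diff_Phi_grid:
  assumes "3 \<le> n" "k + 2 \<le> n"
  shows "second_diff (\<lambda>j. Phi n (real j / real n)) k
      = 1 / real (n choose k) + 1 / real (n choose (k + 2))"
proof -
  define I where "I j = integral {0..1} (Phi_integrand n j)" for j
  have "(Phi_integrand n (k + 2) has_integral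
      2 * I (k + 1) - I k + (1 / real (n choose k) + 1 / real (n choose (k + 2))) / (real n + 1)) {0..1}"
    unfolding I_def using assms
    by (intro Phi_integrand_has_integral_step Phi_integrand_integrable) auto
  then have integrals: "second_diff I k
      = (1 / real (n choose k) + 1 / real (n choose (k + 2))) / (real n + 1)"
    unfolding second_diff_def I_def by (simp add: integral_unique)
  have grid: "Phi n (real j / real n) = (real n + 1) * I j" if "j \<le> n" for j
    unfolding I_def using Phi_grid[of n j] that assms by simp
  have "k \<le> n" "k + 1 \<le> n" "k + 2 \<le> n"
    using assms by auto
  then have "second_diff (\<lambda>j. Phi n (real j / real n)) k = (real n + 1) * second_diff I k"
    unfolding second_diff_def by (simp only: grid) (simp add: algebra_simps)
  with integrals show ?thesis
    by simp
qed

lemma convex_on_bern_form_rounded: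
  fixes g :: "real \<Rightarrow> real" and c :: "nat \<Rightarrow> real"
  assumes "3 \<le> n" and convex: "convex_on {0..1} (\<lambda>x. g x - Phi n x)"
    and bounded: "\<And>k. k \<le> n \<Longrightarrow> g (real k / real n) * real (n choose k) - c k \<in> {a..b}"
    and "a \<le> 0" "b - a \<le> 1"
  shows "convex_on {0..1} (bern_form n c)"
proof (rule convex_on_bern_form)
  fix k assume k: "k + 2 \<le> n"
  define S where "S = 1 / real (n choose k) + 1 / real (n choose (k + 2))"
  define e where "e j = g (real j / real n) - c j / real (n choose j)" for j
  have "S \<le> second_diff (\<lambda>j. g (real j / real n)) k"
    using second_diff_convex_on_grid[OF convex k] second_diff_Phi_grid[OF assms(1) k]
    by (simp add: S_def second_diff_diff)
  moreover have "second_diff e k \<le> S"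
    unfolding S_def using k assms(3-)
    by (intro second_diff_le_of_scaled_bounds[where a = a and b = b]) (auto simp: e_def algebra_simps)
  moreover have "(\<lambda>j. c j / real (n choose j)) = (\<lambda>j. g (real j / real n) - e j)"
    by (simp add: e_def)
  ultimately show "0 \<le> second_diff (\<lambda>j. c j / real (n choose j)) k"
    by (simp add: second_diff_diff)
qed (use assms(1) in simp)

lemma concave_on_bern_form_rounded:
  fixes g :: "real \<Rightarrow> real" and c :: "nat \<Rightarrow> real"
  assumes "3 \<le> n" and "concave_on {0..1} (\<lambda>x. g x + Phi n x)"
    and bounded: "\<And>k. k \<le> n \<Longrightarrow> g (real k / real n) * real (n choose k) - c k \<in> {a..b}"
    and "0 \<le> b" "b - a \<le> 1"
  shows "concave_on {0..1} (bern_form n c)"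
proof -
  have "convex_on {0..1} (\<lambda>x. - g x - Phi n x)"
    using assms(2) by (simp add: concave_on_def)
  moreover have "- g (real k / real n) * real (n choose k) - - c k \<in> {- b..- a}" if "k \<le> n" for k
    using bounded[OF that] by auto
  ultimately have "convex_on {0..1} (bern_form n (\<lambda>k. - c k))"
    using assms(4,5) by (intro convex_on_bern_form_rounded[OF assms(1), where a = "- b" and b = "- a"]) auto
  then show ?thesis
    by (simp add: concave_on_def bern_form_uminus)
qed

theorem theorem1p10:
  fixes f :: "real \<Rightarrow> real" and n :: nat
  assumes "f 0 \<in> \<int>" and "f 1 \<in> \<int>" and "n \<ge> 3"
  shows "(convex_on {0..1} (\<lambda>x. f x - Phi n x) \<longrightarrow>
            convex_on {0..1} (B_tilde n f) \<and>
            (\<forall>r. nearest_choice n f r \<longrightarrow> convex_on {0..1} (B_hat n r)))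
       \<and> (concave_on {0..1} (\<lambda>x. f x + Phi n x) \<longrightarrow>
            concave_on {0..1} (B_tilde n f) \<and>
            (\<forall>r. nearest_choice n f r \<longrightarrow> concave_on {0..1} (B_hat n r)))"
proof -
  have floor_error: "y - of_int \<lfloor>y\<rfloor> \<in> {0..1}" for y :: real
    using of_int_floor_le[of y] real_of_int_floor_add_one_ge[of y] by (simp add: algebra_simps)
  have nearest_error: "f (real k / real n) * real (n choose k) - of_int (r k) \<in> {- 1 / 2..1 / 2}"
    if "nearest_choice n f r" "k \<le> n" for r k
  proof -
    have "\<bar>f (real k / real n) * real (n choose k) - of_int (r k)\<bar> \<le> 1 / 2"
      using that unfolding nearest_choice_def by blast
    then show ?thesis
      unfolding atLeastAtMost_iff abs_le_iff by linarith
  qed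
  show ?thesis
    unfolding B_tilde_def B_hat_def
  proof (intro conjI impI allI)
    assume "convex_on {0..1} (\<lambda>x. f x - Phi n x)"
    note rounded = convex_on_bern_form_rounded[OF assms(3) this]
    show "convex_on {0..1} (bern_form n (\<lambda>k. of_int \<lfloor>f (real k / real n) * real (n choose k)\<rfloor>))"
      by (intro rounded[where a = 0 and b = 1] floor_error) simp_all
    show "convex_on {0..1} (bern_form n (\<lambda>k. of_int (r k)))" if "nearest_choice n f r" for r
      by (intro rounded[where a = "- 1 / 2" and b = "1 / 2"] nearest_error[OF that]) simp_all
  next
    assume "concave_on {0..1} (\<lambda>x. f x + Phi n x)"
    note rounded = concave_on_bern_form_rounded[OF assms(3) this]
    show "concave_on {0..1} (bern_form n (\<lambda>k. of_int \<lfloor>f (real k / real n) * real (n choose k)\<rfloor>))"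
      by (intro rounded[where a = 0 and b = 1] floor_error) simp_all
    show "concave_on {0..1} (bern_form n (\<lambda>k. of_int (r k)))" if "nearest_choice n f r" for r
      by (intro rounded[where a = "- 1 / 2" and b = "1 / 2"] nearest_error[OF that]) simp_all
  qed
qed

end
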